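(* Assume Assumption 1 and Assumption 2 with $\delta>1/10$. For any distinct $u,u_1,u_2\in L$, as $n_L,n_R\to\infty$, $$\Pr[(u_1,u_2)\in E\mid S_L,S_R,\ (u,u_1)\in E,\ (u,u_2)\in E]=\frac{1}{1+\frac{M_{R2}^2}{M_{R3}M_{R1}}w_u}+o(1).$$
   Context: Model: left nodes $L$ ($|L|=n_L$), right nodes $R$ ($|R|=n_R$), weight sequences $S_L=(w_u)_{u\in L}$, $S_R=(w_v)_{v\in R}$ of positive reals; $M_{Lk}=\frac1{n_L}\sum_{u\in L}w_u^k$, $M_{Rk}=\frac1{n_R}\sum_{v\in R}w_v^k$. The random bipartite graph $G_b=(L\sqcup R,E_b)$ contains each edge $(u,v)$, $u\in L$, $v\in R$, independently with probability $\min\left(\frac{w_uw_v}{n_RM_{R1}},1\right)$. The projected graph is $G=(L,E)$ with $(u,u')\in E$ for distinct $u,u'\in L$ iff there is $z\in R$ with $(u,z),(u',z)\in E_b$. Assumption 1: $\frac{w_uw_v}{n_RM_{R1}}\le1$ for all $u\in L,v\in R$. Assumption 2 (parameter $\delta>0$), as $n_L,n_R\to\infty$: $\max(S_L\cup S_R)=O(n_R^{1/2-\delta})$, $\min S_L=\Omega(1)$, $M_{R2}=O(M_{R1}^2)$, $M_{R4}=O(n_R^{1-2\delta})$. *)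

theory Defs
  imports "HOL-Probability.Probability" "HOL-Library.Landau_Symbols"
begin

text \<open>Left nodes are 0..<nL, right nodes are 0..<nR; weights are functions nat => real.\<close>

definition moment :: "nat \<Rightarrow> (nat \<Rightarrow> real) \<Rightarrow> nat \<Rightarrow> real" where
  "moment n w k = (\<Sum>i<n. w i ^ k) / real n"

definition edge_prob :: "nat \<Rightarrow> (nat \<Rightarrow> real) \<Rightarrow> (nat \<Rightarrow> real) \<Rightarrow> nat \<Rightarrow> nat \<Rightarrow> real" where
  "edge_prob nR wL wR u v = min (wL u * wR v / (real nR * moment nR wR 1)) 1"

definition bip_graph :: "nat \<Rightarrow> nat \<Rightarrow> (nat \<Rightarrow> real) \<Rightarrow> (nat \<Rightarrow> real) \<Rightarrow> (nat \<times> nat \<Rightarrow> bool) pmf" where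
  "bip_graph nL nR wL wR =
     Pi_pmf ({..<nL} \<times> {..<nR}) False (\<lambda>(u,v). bernoulli_pmf (edge_prob nR wL wR u v))"

definition proj_edge :: "nat \<Rightarrow> (nat \<times> nat \<Rightarrow> bool) \<Rightarrow> nat \<Rightarrow> nat \<Rightarrow> bool" where
  "proj_edge nR Gb u u' \<longleftrightarrow> u \<noteq> u' \<and> (\<exists>z<nR. Gb (u,z) \<and> Gb (u',z))"

definition cprob :: "'a pmf \<Rightarrow> ('a \<Rightarrow> bool) \<Rightarrow> ('a \<Rightarrow> bool) \<Rightarrow> real" where
  "cprob D A B = measure_pmf.prob D {x. A x \<and> B x} / measure_pmf.prob D {x. B x}"

end

theory Submission
  imports Defs
begin

text \<open>
  Write p(x,z) for the edge probabilities, S2(x,y) for the sum over z of p(x,z) p(y,z), and S3 for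
  the sum over z of p(u,z) p(u1,z) p(u2,z). The cherry "u joined to u1 and to u2" arises either
  from one right node adjacent to all of u, u1, u2 (probability about S3) or from two different
  right nodes (probability about S2(u,u1) S2(u,u2)), and only the first alternative also closes the
  triangle. Second-order Bonferroni inequalities for the codegree counts make this precise: the two
  probabilities are S3 (1 + O(e)) and (S3 + S2(u,u1) S2(u,u2)) (1 + O(e)), where e bounds every
  p(u,z) and every S2, and e = O(nR powr -\<delta>) under Assumption 2. For p(x,z) = w_x w_z / (nR M_R1)
  the ratio S3 / (S3 + S2(u,u1) S2(u,u2)) is exactly the claimed limit.

  Only \<delta> > 0, the bound on the maximal weight and M_R2 = O(M_R1^2) are used.
\<close>

section \<open>Elementary real arithmetic\<close>

lemma ratio_approx:
  fixes PA PB S D e :: real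
  assumes D: "D > 0" and S: "0 \<le> S" "S \<le> D" and e: "0 \<le> e" "e \<le> 1/6"
    and PB: "D * (1 - 3*e) \<le> PB" "PB \<le> D" and PA: "S * (1 - e) \<le> PA" "PA \<le> S + e * D"
  shows "\<bar>PA / PB - S / D\<bar> \<le> 8 * e"
proof -
  have D_shrunk: "D * (1 - 3*e) \<ge> D / 2" using D e by simp
  then have PB_pos: "PB > 0" using PB D by linarith
  have "0 \<le> S * (1 - e)" using S e by simp
  then have PA_nonneg: "0 \<le> PA" using PA by linarith
  have "PA / PB \<le> (S + e*D) / (D * (1 - 3*e))"
    using PA PB D_shrunk D S e by (intro frac_le) auto
  also have "\<dots> = S / D + (e*D + 3*e*S) / (D * (1 - 3*e))"
    using D e by (simp add: field_simps)
  also have "\<dots> \<le> S / D + (4*e*D) / (D / 2)"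
    using D S e D_shrunk mult_left_mono[OF \<open>S \<le> D\<close> \<open>0 \<le> e\<close>]
    by (intro add_left_mono frac_le) (auto simp: mult.commute)
  also have "\<dots> = S / D + 8 * e"
    using D by simp
  finally have upper: "PA / PB - S / D \<le> 8 * e" by linarith
  have "S / D - e \<le> S * (1 - e) / D"
    using D mult_right_mono[OF \<open>S \<le> D\<close> \<open>0 \<le> e\<close>] by (simp add: field_simps)
  also have "\<dots> \<le> PA / D" using PA D by (simp add: divide_right_mono)
  also have "\<dots> \<le> PA / PB" using PA_nonneg PB PB_pos by (intro divide_left_mono) auto
  finally have lower: "S / D - PA / PB \<le> 8 * e" using e by linarith
  show ?thesis using upper lower by linarith
qed

lemma absorb_second_order_terms:
  fixes P S Sq Sr e :: real
  assumes P: "S + Sq*Sr - e*S - (2*S*Sq + Sq^2*Sr)/2 - (2*S*Sr + Sr^2*Sq)/2 \<le> P"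
    and nonneg: "0 \<le> S" "0 \<le> Sq" "0 \<le> Sr" and small: "Sq \<le> e" "Sr \<le> e"
  shows "(S + Sq*Sr) * (1 - 3*e) \<le> P"
proof -
  have "S*Sq \<le> S*e" "S*Sr \<le> S*e" "Sq*(Sq*Sr) \<le> e*(Sq*Sr)" "Sr*(Sq*Sr) \<le> e*(Sq*Sr)"
    using nonneg small by (simp_all add: mult_left_mono mult_right_mono)
  moreover have "0 \<le> e*(Sq*Sr)" using nonneg small by simp
  moreover have "2*S*Sq + Sq^2*Sr = 2*(S*Sq) + Sq*(Sq*Sr)" "2*S*Sr + Sr^2*Sq = 2*(S*Sr) + Sr*(Sq*Sr)"
    "(S + Sq*Sr)*(1-3*e) = S + Sq*Sr - 3*(S*e) - 3*(e*(Sq*Sr))" "e*S = S*e"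
    by (simp_all add: power2_eq_square algebra_simps)
  ultimately show ?thesis using P by argo
qed

lemma of_bool_ge_count_minus_pairs:
  fixes t :: nat
  shows "real t - (real t ^ 2 - real t) / 2 \<le> of_bool (0 < t)"
proof (cases "t \<le> 2")
  case True
  then have "t = 0 \<or> t = 1 \<or> t = 2" by auto
  then show ?thesis by (auto simp: power2_eq_square)
next
  case False
  then have "3 * real t \<le> real t * real t" by (intro mult_right_mono) auto
  then have "real t - (real t ^ 2 - real t) / 2 \<le> 0" by (simp add: power2_eq_square field_simps)
  moreover have "of_bool (0 < t) = (1::real)" using False by simp
  ultimately show ?thesis by linarith
qed

lemma of_bool_ge_product_minus_pairs:
  fixes q r :: nat
  shows "real q * real r - (real q ^ 2 - real q) * real r / 2 - real q * (real r ^ 2 - real r) / 2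
          \<le> of_bool (0 < q \<and> 0 < r)"
proof (cases "q = 0 \<or> r = 0 \<or> q + r \<ge> 4")
  case True
  have "real q * real r - (real q ^ 2 - real q) * real r / 2 - real q * (real r ^ 2 - real r) / 2
      = real q * real r * (4 - real q - real r) / 2"
    by (simp add: field_simps power2_eq_square)
  moreover have "real q * real r * (4 - real q - real r) \<le> 0" if "q + r \<ge> 4"
    using that by (intro mult_nonneg_nonpos) auto
  ultimately show ?thesis using True by auto
next
  case False
  then have "(q = 1 \<and> r = 1) \<or> (q = 1 \<and> r = 2) \<or> (q = 2 \<and> r = 1)" by auto
  then show ?thesis by (auto simp: power2_eq_square)
qed

lemma double_sum_symmetric_products:
  fixes A B :: "nat \<Rightarrow> real"
  shows "(\<Sum>z<n. \<Sum>z'<n. A z * B z' + B z * A z' + B z * B z' * c)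
    = 2 * (sum A {..<n} * sum B {..<n}) + (sum B {..<n})\<^sup>2 * c"
proof -
  have "(\<Sum>z<n. \<Sum>z'<n. A z * B z') = sum A {..<n} * sum B {..<n}"
    by (simp only: sum_product)
  moreover have "(\<Sum>z<n. \<Sum>z'<n. B z * A z') = sum A {..<n} * sum B {..<n}"
    by (subst sum.swap) (simp only: sum_product mult.commute)
  moreover have "(\<Sum>z<n. \<Sum>z'<n. B z * B z' * c) = (sum B {..<n})\<^sup>2 * c"
    unfolding power2_eq_square by (subst sum_product) (simp only: sum_distrib_right)
  ultimately show ?thesis by (simp only: sum.distrib)
qed

section \<open>Codegree counts\<close>

definition common_nbr :: "nat \<Rightarrow> nat \<Rightarrow> nat \<Rightarrow> (nat \<times> nat \<Rightarrow> bool) \<Rightarrow> real" where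
  "common_nbr x y z G = of_bool (G (x,z) \<and> G (y,z))"

definition common_nbr3 :: "nat \<Rightarrow> nat \<Rightarrow> nat \<Rightarrow> nat \<Rightarrow> (nat \<times> nat \<Rightarrow> bool) \<Rightarrow> real" where
  "common_nbr3 x y w z G = of_bool (G (x,z) \<and> G (y,z) \<and> G (w,z))"

definition codeg :: "nat \<Rightarrow> nat \<Rightarrow> nat \<Rightarrow> (nat \<times> nat \<Rightarrow> bool) \<Rightarrow> real" where
  "codeg x y n G = (\<Sum>z<n. common_nbr x y z G)"

definition codeg3 :: "nat \<Rightarrow> nat \<Rightarrow> nat \<Rightarrow> nat \<Rightarrow> (nat \<times> nat \<Rightarrow> bool) \<Rightarrow> real" where
  "codeg3 x y w n G = (\<Sum>z<n. common_nbr3 x y w z G)"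

definition triangle_witnesses :: "nat \<Rightarrow> nat \<Rightarrow> nat \<Rightarrow> nat \<Rightarrow> (nat \<times> nat \<Rightarrow> bool) \<Rightarrow> real" where
  "triangle_witnesses a b c n G =
     (\<Sum>z<n. \<Sum>z'\<in>{..<n} - {z}. \<Sum>z''\<in>{..<n} - {z,z'}.
        common_nbr a b z G * common_nbr a c z' G * common_nbr b c z'' G)"

definition pair_weight :: "(nat \<times> nat \<Rightarrow> real) \<Rightarrow> nat \<Rightarrow> nat \<Rightarrow> nat \<Rightarrow> real" where
  "pair_weight \<pi> x y n = (\<Sum>z<n. \<pi> (x,z) * \<pi> (y,z))"

definition triple_weight :: "(nat \<times> nat \<Rightarrow> real) \<Rightarrow> nat \<Rightarrow> nat \<Rightarrow> nat \<Rightarrow> nat \<Rightarrow> real" where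
  "triple_weight \<pi> x y w n = (\<Sum>z<n. \<pi> (x,z) * \<pi> (y,z) * \<pi> (w,z))"

lemma codeg_eq_card: "codeg x y n G = real (card {z. z < n \<and> G (x,z) \<and> G (y,z)})"
  by (simp add: codeg_def common_nbr_def Int_def lessThan_def conj_commute)

lemma codeg3_eq_card: "codeg3 x y w n G = real (card {z. z < n \<and> G (x,z) \<and> G (y,z) \<and> G (w,z)})"
  by (simp add: codeg3_def common_nbr3_def Int_def lessThan_def conj_commute)

lemma card_bounded_pos_iff: "0 < card {z. z < (n::nat) \<and> P z} \<longleftrightarrow> (\<exists>z<n. P z)"
  by (auto simp: card_gt_0_iff)

lemma proj_edge_iff_card: "x \<noteq> y \<Longrightarrow> proj_edge n G x y \<longleftrightarrow> 0 < card {z. z < n \<and> G (x,z) \<and> G (y,z)}"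
  by (simp add: proj_edge_def card_bounded_pos_iff)

lemma common_nbr_idem: "common_nbr x y z G * common_nbr x y z G = common_nbr x y z G"
  by (simp add: common_nbr_def)

lemma common_nbr3_idem: "common_nbr3 x y w z G * common_nbr3 x y w z G = common_nbr3 x y w z G"
  by (simp add: common_nbr3_def)

lemma codeg_sq_minus_codeg:
  "codeg x y n G ^ 2 - codeg x y n G =
     (\<Sum>z<n. \<Sum>z'\<in>{..<n} - {z}. common_nbr x y z G * common_nbr x y z' G)"
proof -
  have "codeg x y n G ^ 2 = (\<Sum>z<n. \<Sum>z'<n. common_nbr x y z G * common_nbr x y z' G)"
    by (simp add: power2_eq_square codeg_def sum_product)
  also have "\<dots> = (\<Sum>z<n. common_nbr x y z G +
                     (\<Sum>z'\<in>{..<n} - {z}. common_nbr x y z G * common_nbr x y z' G))"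
    by (intro sum.cong refl) (simp add: sum.remove common_nbr_idem)
  finally show ?thesis by (simp add: sum.distrib codeg_def)
qed

lemma codeg3_sq_minus_codeg3:
  "codeg3 x y w n G ^ 2 - codeg3 x y w n G =
     (\<Sum>z<n. \<Sum>z'\<in>{..<n} - {z}. common_nbr3 x y w z G * common_nbr3 x y w z' G)"
proof -
  have "codeg3 x y w n G ^ 2 = (\<Sum>z<n. \<Sum>z'<n. common_nbr3 x y w z G * common_nbr3 x y w z' G)"
    by (simp add: power2_eq_square codeg3_def sum_product)
  also have "\<dots> = (\<Sum>z<n. common_nbr3 x y w z G +
                     (\<Sum>z'\<in>{..<n} - {z}. common_nbr3 x y w z G * common_nbr3 x y w z' G))"
    by (intro sum.cong refl) (simp add: sum.remove common_nbr3_idem)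
  finally show ?thesis by (simp add: sum.distrib codeg3_def)
qed

context
  fixes a b c n :: nat and G :: "nat \<times> nat \<Rightarrow> bool"
  assumes ab: "a \<noteq> b" and ac: "a \<noteq> c" and bc: "b \<noteq> c"
begin

lemma cherry_le_codeg_product:
  "of_bool (proj_edge n G a b \<and> proj_edge n G a c) \<le> codeg a b n G * codeg a c n G"
  unfolding proj_edge_iff_card[OF ab] proj_edge_iff_card[OF ac] codeg_eq_card
  by (auto simp del: of_nat_mult simp add: of_nat_mult[symmetric] Suc_le_eq)

lemma cherry_ge_bonferroni:
  "codeg a b n G * codeg a c n G - (codeg a b n G ^ 2 - codeg a b n G) * codeg a c n G / 2
     - codeg a b n G * (codeg a c n G ^ 2 - codeg a c n G) / 2
   \<le> of_bool (proj_edge n G a b \<and> proj_edge n G a c)"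
  unfolding proj_edge_iff_card[OF ab] proj_edge_iff_card[OF ac] codeg_eq_card
  by (rule of_bool_ge_product_minus_pairs)

lemma triangle_ge_bonferroni:
  "codeg3 a b c n G - (codeg3 a b c n G ^ 2 - codeg3 a b c n G) / 2
   \<le> of_bool (proj_edge n G b c \<and> proj_edge n G a b \<and> proj_edge n G a c)"
proof -
  have "codeg3 a b c n G - (codeg3 a b c n G ^ 2 - codeg3 a b c n G) / 2
      \<le> of_bool (0 < card {z. z < n \<and> G (a,z) \<and> G (b,z) \<and> G (c,z)})"
    unfolding codeg3_eq_card by (rule of_bool_ge_count_minus_pairs)
  also have "\<dots> \<le> of_bool (proj_edge n G b c \<and> proj_edge n G a b \<and> proj_edge n G a c)"
    using ab ac bc by (auto simp: proj_edge_def card_bounded_pos_iff)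
  finally show ?thesis .
qed

lemma triangle_witnesses_nonneg: "0 \<le> triangle_witnesses a b c n G"
  unfolding triangle_witnesses_def by (intro sum_nonneg) (auto simp: common_nbr_def)

text \<open>Without a right node adjacent to all of a, b, c, the three witnesses of a triangle are
  distinct.\<close>
lemma triangle_le_codeg3_plus_witnesses:
  "of_bool (proj_edge n G b c \<and> proj_edge n G a b \<and> proj_edge n G a c)
   \<le> codeg3 a b c n G + triangle_witnesses a b c n G"
proof (cases "\<exists>z<n. G (a,z) \<and> G (b,z) \<and> G (c,z)")
  case True
  then have "1 \<le> codeg3 a b c n G"
    unfolding codeg3_eq_card card_bounded_pos_iff[symmetric] by linarith
  then show ?thesis using triangle_witnesses_nonneg by simp
next
  case no_common: False
  show ?thesis
  proof (cases "proj_edge n G b c \<and> proj_edge n G a b \<and> proj_edge n G a c")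
    case False
    then show ?thesis using triangle_witnesses_nonneg by (auto simp: codeg3_eq_card)
  next
    case True
    then obtain z1 z2 z3 where z: "z1 < n" "z2 < n" "z3 < n" "G (a,z1)" "G (b,z1)"
      "G (a,z2)" "G (c,z2)" "G (b,z3)" "G (c,z3)"
      unfolding proj_edge_def by blast
    then have "z1 \<noteq> z2" "z1 \<noteq> z3" "z2 \<noteq> z3" using no_common by auto
    define f where "f z z' z'' = common_nbr a b z G * common_nbr a c z' G * common_nbr b c z'' G"
      for z z' z''
    have f_nonneg: "0 \<le> f z z' z''" for z z' z'' by (simp add: f_def common_nbr_def)
    have "1 = f z1 z2 z3" using z by (simp add: f_def common_nbr_def)
    also have "\<dots> \<le> (\<Sum>z''\<in>{..<n} - {z1,z2}. f z1 z2 z'')"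
      by (rule member_le_sum) (use z \<open>z1 \<noteq> z3\<close> \<open>z2 \<noteq> z3\<close> f_nonneg in auto)
    also have "\<dots> \<le> (\<Sum>z'\<in>{..<n} - {z1}. \<Sum>z''\<in>{..<n} - {z1,z'}. f z1 z' z'')"
      by (rule member_le_sum[where f = "\<lambda>z'. \<Sum>z''\<in>{..<n} - {z1,z'}. f z1 z' z''"])
         (use z \<open>z1 \<noteq> z2\<close> f_nonneg in \<open>auto intro: sum_nonneg\<close>)
    also have "\<dots> \<le> triangle_witnesses a b c n G"
      unfolding triangle_witnesses_def f_def[symmetric]
      by (rule member_le_sum[where f = "\<lambda>z. \<Sum>z'\<in>{..<n} - {z}. \<Sum>z''\<in>{..<n} - {z,z'}. f z z' z''"])
         (use z f_nonneg in \<open>auto intro!: sum_nonneg\<close>)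
    finally show ?thesis using True by (simp add: codeg3_eq_card)
  qed
qed

end

section \<open>Independent Bernoulli edges\<close>

locale bernoulli_edges =
  fixes I :: "(nat \<times> nat) set" and \<pi> :: "nat \<times> nat \<Rightarrow> real"
  assumes finite_edges: "finite I"
    and edge_prob_range: "\<And>x. x \<in> I \<Longrightarrow> 0 \<le> \<pi> x \<and> \<pi> x \<le> 1"
begin

abbreviation random_graph :: "(nat \<times> nat \<Rightarrow> bool) pmf" where
  "random_graph \<equiv> Pi_pmf I False (\<lambda>x. bernoulli_pmf (\<pi> x))"

lemma finite_set_random_graph: "finite (set_pmf random_graph)"
  using finite_edges by (simp add: set_Pi_pmf finite_PiE_dflt)

lemma integrable_random_graph [simp]: "integrable (measure_pmf random_graph) (f :: _ \<Rightarrow> real)"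
  by (rule integrable_measure_pmf_finite[OF finite_set_random_graph])

lemma prob_eq_expectation:
  "measure_pmf.prob random_graph {G. P G} = measure_pmf.expectation random_graph (\<lambda>G. of_bool (P G))"
proof -
  have "(\<lambda>G. of_bool (P G) :: real) = indicator {G. P G}" by (auto simp: fun_eq_iff)
  then show ?thesis by simp
qed

lemma expectation_all_edges:
  assumes "K \<subseteq> I" and f: "\<And>G. f G = of_bool (\<forall>x\<in>K. G x)"
  shows "measure_pmf.expectation random_graph f = prod \<pi> K"
proof -
  define B where "B x = (if x \<in> K then {True} else UNIV)" for x
  have "f = indicator (Pi I B)"
    using \<open>K \<subseteq> I\<close> by (auto simp: fun_eq_iff f B_def indicator_def Pi_def)
  then have "measure_pmf.expectation random_graph f = measure_pmf.prob random_graph (Pi I B)"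
    by simp
  also have "\<dots> = (\<Prod>x\<in>I. measure_pmf.prob (bernoulli_pmf (\<pi> x)) (B x))"
    by (rule measure_Pi_pmf_Pi[OF finite_edges])
  also have "\<dots> = (\<Prod>x\<in>I. if x \<in> K then \<pi> x else 1)"
    by (intro prod.cong refl) (auto simp: B_def measure_pmf_single edge_prob_range)
  also have "\<dots> = prod \<pi> K"
    using \<open>K \<subseteq> I\<close> finite_edges by (simp add: prod.If_cases Int_absorb1)
  finally show ?thesis .
qed

end

locale bernoulli_triple = bernoulli_edges +
  fixes a b c n :: nat
  assumes edges_in: "\<And>z. z < n \<Longrightarrow> (a,z) \<in> I \<and> (b,z) \<in> I \<and> (c,z) \<in> I"
    and distinct: "a \<noteq> b" "a \<noteq> c" "b \<noteq> c"
begin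

abbreviation expect :: "((nat \<times> nat \<Rightarrow> bool) \<Rightarrow> real) \<Rightarrow> real" where
  "expect f \<equiv> measure_pmf.expectation random_graph f"

abbreviation prob :: "((nat \<times> nat \<Rightarrow> bool) \<Rightarrow> bool) \<Rightarrow> real" where
  "prob P \<equiv> measure_pmf.prob random_graph {G. P G}"

abbreviation "w_abc \<equiv> triple_weight \<pi> a b c n"
abbreviation "w_ab \<equiv> pair_weight \<pi> a b n"
abbreviation "w_ac \<equiv> pair_weight \<pi> a c n"
abbreviation "w_bc \<equiv> pair_weight \<pi> b c n"

abbreviation cherry :: "(nat \<times> nat \<Rightarrow> bool) \<Rightarrow> bool" where
  "cherry G \<equiv> proj_edge n G a b \<and> proj_edge n G a c"

abbreviation triangle :: "(nat \<times> nat \<Rightarrow> bool) \<Rightarrow> bool" where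
  "triangle G \<equiv> proj_edge n G b c \<and> cherry G"

lemma prob_range:
  "z < n \<Longrightarrow> 0 \<le> \<pi>(a,z) \<and> 0 \<le> \<pi>(b,z) \<and> 0 \<le> \<pi>(c,z) \<and> \<pi>(a,z) \<le> 1 \<and> \<pi>(b,z) \<le> 1 \<and> \<pi>(c,z) \<le> 1"
  using edge_prob_range edges_in by blast

lemma expectation_common_nbr_pair:
  assumes "z < n" "z' < n"
  shows "expect (\<lambda>G. common_nbr a b z G * common_nbr a c z' G) =
     (if z = z' then \<pi>(a,z) * \<pi>(b,z) * \<pi>(c,z) else \<pi>(a,z) * \<pi>(b,z) * (\<pi>(a,z') * \<pi>(c,z')))"
proof (cases "z = z'")
  case True
  have "expect (\<lambda>G. common_nbr a b z G * common_nbr a c z' G) = prod \<pi> {(a,z),(b,z),(c,z)}"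
    by (rule expectation_all_edges) (use edges_in assms True in \<open>auto simp: common_nbr_def\<close>)
  then show ?thesis using distinct True by (simp add: mult.assoc)
next
  case False
  have "expect (\<lambda>G. common_nbr a b z G * common_nbr a c z' G) = prod \<pi> {(a,z),(b,z),(a,z'),(c,z')}"
    by (rule expectation_all_edges) (use edges_in assms False in \<open>auto simp: common_nbr_def\<close>)
  then show ?thesis using distinct False by (simp add: mult.assoc)
qed

lemma expectation_common_nbr_triple_le:
  assumes "z < n" "z' < n" "z'' < n" "z \<noteq> z'"
  shows "expect (\<lambda>G. common_nbr a b z G * common_nbr a b z' G * common_nbr a c z'' G) \<le>
     (if z'' = z then \<pi>(a,z) * \<pi>(b,z) * \<pi>(c,z) * (\<pi>(a,z') * \<pi>(b,z')) else 0) +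
     (if z'' = z' then \<pi>(a,z) * \<pi>(b,z) * (\<pi>(a,z') * \<pi>(b,z') * \<pi>(c,z')) else 0) +
     \<pi>(a,z) * \<pi>(b,z) * (\<pi>(a,z') * \<pi>(b,z')) * (\<pi>(a,z'') * \<pi>(c,z''))"
proof -
  note nonneg = prob_range[OF assms(1)] prob_range[OF assms(2)] prob_range[OF assms(3)]
  consider (first) "z'' = z" | (second) "z'' = z'" | (other) "z'' \<noteq> z" "z'' \<noteq> z'" by blast
  then show ?thesis
  proof cases
    case first
    have "expect (\<lambda>G. common_nbr a b z G * common_nbr a b z' G * common_nbr a c z'' G)
        = prod \<pi> {(a,z),(b,z),(c,z),(a,z'),(b,z')}"
      by (rule expectation_all_edges) (use edges_in assms first in \<open>auto simp: common_nbr_def\<close>)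
    then show ?thesis using distinct assms first nonneg by (simp add: mult.assoc)
  next
    case second
    have "expect (\<lambda>G. common_nbr a b z G * common_nbr a b z' G * common_nbr a c z'' G)
        = prod \<pi> {(a,z),(b,z),(a,z'),(b,z'),(c,z')}"
      by (rule expectation_all_edges) (use edges_in assms second in \<open>auto simp: common_nbr_def\<close>)
    then show ?thesis using distinct assms second nonneg by (simp add: mult.assoc)
  next
    case other
    have "expect (\<lambda>G. common_nbr a b z G * common_nbr a b z' G * common_nbr a c z'' G)
        = prod \<pi> {(a,z),(b,z),(a,z'),(b,z'),(a,z''),(c,z'')}"
      by (rule expectation_all_edges) (use edges_in assms other in \<open>auto simp: common_nbr_def\<close>)
    then show ?thesis using distinct assms other nonneg by (simp add: mult.assoc)
  qed
qed

lemma expectation_common_nbr3: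
  "z < n \<Longrightarrow> expect (common_nbr3 a b c z) = \<pi>(a,z) * \<pi>(b,z) * \<pi>(c,z)"
  using expectation_all_edges[of "{(a,z),(b,z),(c,z)}" "common_nbr3 a b c z"] edges_in distinct
  by (auto simp: common_nbr3_def mult.assoc)

lemma expectation_common_nbr3_pair:
  assumes "z < n" "z' < n" "z \<noteq> z'"
  shows "expect (\<lambda>G. common_nbr3 a b c z G * common_nbr3 a b c z' G) =
     \<pi>(a,z) * \<pi>(b,z) * \<pi>(c,z) * (\<pi>(a,z') * \<pi>(b,z') * \<pi>(c,z'))"
proof -
  have "expect (\<lambda>G. common_nbr3 a b c z G * common_nbr3 a b c z' G)
      = prod \<pi> {(a,z),(b,z),(c,z),(a,z'),(b,z'),(c,z')}"
    by (rule expectation_all_edges) (use edges_in assms in \<open>auto simp: common_nbr3_def\<close>)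
  then show ?thesis using distinct assms by (simp add: mult.assoc)
qed

lemma expectation_common_nbr_cycle:
  assumes "z < n" "z' < n" "z'' < n" "z \<noteq> z'" "z \<noteq> z''" "z' \<noteq> z''"
  shows "expect (\<lambda>G. common_nbr a b z G * common_nbr a c z' G * common_nbr b c z'' G) =
     \<pi>(a,z) * \<pi>(b,z) * (\<pi>(a,z') * \<pi>(c,z')) * (\<pi>(b,z'') * \<pi>(c,z''))"
proof -
  have "expect (\<lambda>G. common_nbr a b z G * common_nbr a c z' G * common_nbr b c z'' G)
      = prod \<pi> {(a,z),(b,z),(a,z'),(c,z'),(b,z''),(c,z'')}"
    by (rule expectation_all_edges) (use edges_in assms in \<open>auto simp: common_nbr_def\<close>)
  then show ?thesis using distinct assms by (simp add: mult.assoc)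
qed

lemma expectation_codeg_product:
  "expect (\<lambda>G. codeg a b n G * codeg a c n G) =
     w_abc + w_ab * w_ac - (\<Sum>z<n. \<pi>(a,z) * \<pi>(b,z) * (\<pi>(a,z) * \<pi>(c,z)))"
proof -
  define A where "A z = \<pi>(a,z) * \<pi>(b,z) * \<pi>(c,z)" for z
  define B where "B z = \<pi>(a,z) * \<pi>(b,z)" for z
  define C where "C z = \<pi>(a,z) * \<pi>(c,z)" for z
  have "expect (\<lambda>G. codeg a b n G * codeg a c n G) =
      expect (\<lambda>G. \<Sum>z<n. \<Sum>z'<n. common_nbr a b z G * common_nbr a c z' G)"
    by (simp add: codeg_def sum_product)
  also have "\<dots> = (\<Sum>z<n. \<Sum>z'<n. expect (\<lambda>G. common_nbr a b z G * common_nbr a c z' G))"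
    by simp
  also have "\<dots> = (\<Sum>z<n. \<Sum>z'<n. B z * C z' + (if z = z' then A z - B z * C z else 0))"
    by (intro sum.cong refl) (auto simp: expectation_common_nbr_pair A_def B_def C_def)
  also have "\<dots> = sum A {..<n} + sum B {..<n} * sum C {..<n} - (\<Sum>z<n. B z * C z)"
    by (simp add: sum.distrib sum_subtractf sum_product)
  finally show ?thesis
    by (simp add: triple_weight_def pair_weight_def A_def B_def C_def)
qed

lemma expectation_codeg_pairs_product_le:
  "expect (\<lambda>G. (codeg a b n G ^ 2 - codeg a b n G) * codeg a c n G)
     \<le> 2 * w_abc * w_ab + w_ab ^ 2 * w_ac"
proof -
  define A where "A z = \<pi>(a,z) * \<pi>(b,z) * \<pi>(c,z)" for z
  define B where "B z = \<pi>(a,z) * \<pi>(b,z)" for z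
  define C where "C z = \<pi>(a,z) * \<pi>(c,z)" for z
  define g where "g z z' z'' = (if z'' = z then A z * B z' else 0)
    + (if z'' = z' then B z * A z' else 0) + B z * B z' * C z''" for z z' z''
  have g_nonneg: "0 \<le> g z z' z''" if "z < n" "z' < n" "z'' < n" for z z' z''
    using prob_range that by (auto simp: g_def A_def B_def C_def)
  have expand: "(codeg a b n G ^ 2 - codeg a b n G) * codeg a c n G =
     (\<Sum>z<n. \<Sum>z'\<in>{..<n} - {z}. \<Sum>z''<n.
        common_nbr a b z G * common_nbr a b z' G * common_nbr a c z'' G)" for G
    unfolding codeg_sq_minus_codeg codeg_def[of a c] sum_distrib_right unfolding sum_distrib_left ..
  have "expect (\<lambda>G. (codeg a b n G ^ 2 - codeg a b n G) * codeg a c n G) =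
     (\<Sum>z<n. \<Sum>z'\<in>{..<n} - {z}. \<Sum>z''<n.
               expect (\<lambda>G. common_nbr a b z G * common_nbr a b z' G * common_nbr a c z'' G))"
    unfolding expand by simp
  also have "\<dots> \<le> (\<Sum>z<n. \<Sum>z'\<in>{..<n} - {z}. \<Sum>z''<n. g z z' z'')"
    unfolding g_def A_def B_def C_def by (intro sum_mono expectation_common_nbr_triple_le) auto
  also have "\<dots> \<le> (\<Sum>z<n. \<Sum>z'<n. \<Sum>z''<n. g z z' z'')"
    by (intro sum_mono sum_mono2) (auto intro!: sum_nonneg g_nonneg)
  also have "\<dots> = (\<Sum>z<n. \<Sum>z'<n. A z * B z' + B z * A z' + B z * B z' * sum C {..<n})"
    by (intro sum.cong refl) (simp add: g_def sum.distrib sum_distrib_left)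
  also have "\<dots> = 2 * (sum A {..<n} * sum B {..<n}) + (sum B {..<n})\<^sup>2 * sum C {..<n}"
    by (rule double_sum_symmetric_products)
  finally show ?thesis
    by (simp add: triple_weight_def pair_weight_def A_def B_def C_def)
qed

lemma expectation_codeg3: "expect (codeg3 a b c n) = w_abc"
proof -
  have "codeg3 a b c n = (\<lambda>G. \<Sum>z<n. common_nbr3 a b c z G)"
    by (simp add: fun_eq_iff codeg3_def)
  then show ?thesis by (simp add: triple_weight_def expectation_common_nbr3)
qed

lemma expectation_codeg3_pairs_le:
  "expect (\<lambda>G. codeg3 a b c n G ^ 2 - codeg3 a b c n G) \<le> w_abc ^ 2"
proof -
  define A where "A z = \<pi>(a,z) * \<pi>(b,z) * \<pi>(c,z)" for z
  have "expect (\<lambda>G. codeg3 a b c n G ^ 2 - codeg3 a b c n G) =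
     (\<Sum>z<n. \<Sum>z'\<in>{..<n} - {z}. expect (\<lambda>G. common_nbr3 a b c z G * common_nbr3 a b c z' G))"
    unfolding codeg3_sq_minus_codeg3 by simp
  also have "\<dots> = (\<Sum>z<n. \<Sum>z'\<in>{..<n} - {z}. A z * A z')"
    by (intro sum.cong refl) (simp add: expectation_common_nbr3_pair A_def)
  also have "\<dots> \<le> (\<Sum>z<n. \<Sum>z'<n. A z * A z')"
    using prob_range by (intro sum_mono sum_mono2) (auto simp: A_def)
  also have "\<dots> = w_abc ^ 2"
    by (simp add: sum_product[symmetric] power2_eq_square triple_weight_def A_def)
  finally show ?thesis .
qed

lemma expectation_triangle_witnesses_le:
  "expect (triangle_witnesses a b c n) \<le> w_ab * w_ac * w_bc"
proof -
  define B where "B z = \<pi>(a,z) * \<pi>(b,z)" for z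
  define C where "C z = \<pi>(a,z) * \<pi>(c,z)" for z
  define D where "D z = \<pi>(b,z) * \<pi>(c,z)" for z
  have nonneg: "0 \<le> B z" "0 \<le> C z" "0 \<le> D z" if "z < n" for z
    using prob_range[OF that] by (auto simp: B_def C_def D_def)
  have "expect (triangle_witnesses a b c n) =
     (\<Sum>z<n. \<Sum>z'\<in>{..<n} - {z}. \<Sum>z''\<in>{..<n} - {z,z'}.
        expect (\<lambda>G. common_nbr a b z G * common_nbr a c z' G * common_nbr b c z'' G))"
    unfolding triangle_witnesses_def by simp
  also have "\<dots> = (\<Sum>z<n. \<Sum>z'\<in>{..<n} - {z}. \<Sum>z''\<in>{..<n} - {z,z'}. B z * C z' * D z'')"
    by (intro sum.cong refl) (auto simp: expectation_common_nbr_cycle B_def C_def D_def)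
  also have "\<dots> \<le> (\<Sum>z<n. \<Sum>z'\<in>{..<n} - {z}. \<Sum>z''<n. B z * C z' * D z'')"
    by (intro sum_mono sum_mono2) (auto intro!: mult_nonneg_nonneg nonneg)
  also have "\<dots> \<le> (\<Sum>z<n. \<Sum>z'<n. \<Sum>z''<n. B z * C z' * D z'')"
    by (intro sum_mono sum_mono2) (auto intro!: mult_nonneg_nonneg nonneg sum_nonneg)
  also have "\<dots> = w_ab * w_ac * w_bc"
    by (simp add: sum_product[symmetric] sum_distrib_right[symmetric] pair_weight_def B_def C_def D_def)
  finally show ?thesis .
qed

lemma weights_nonneg: "0 \<le> w_abc" "0 \<le> w_ab" "0 \<le> w_ac" "0 \<le> w_bc"
  using prob_range by (auto simp: triple_weight_def pair_weight_def intro!: sum_nonneg)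

lemma triple_weight_le_pair_weight: "w_abc \<le> w_ab"
  unfolding triple_weight_def pair_weight_def
  using prob_range by (intro sum_mono) (simp add: mult_left_le)

lemma prob_cherry_le: "prob cherry \<le> w_abc + w_ab * w_ac"
proof -
  have "prob cherry \<le> expect (\<lambda>G. codeg a b n G * codeg a c n G)"
    unfolding prob_eq_expectation
    using distinct by (intro integral_mono cherry_le_codeg_product) auto
  also have "\<dots> \<le> w_abc + w_ab * w_ac"
    unfolding expectation_codeg_product using prob_range by (auto intro!: sum_nonneg)
  finally show ?thesis .
qed

lemma expectation_codeg_product_ge:
  assumes "\<And>z. z < n \<Longrightarrow> \<pi>(a,z) \<le> e"
  shows "w_abc + w_ab * w_ac - e * w_abc \<le> expect (\<lambda>G. codeg a b n G * codeg a c n G)"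
proof -
  have "(\<Sum>z<n. \<pi>(a,z) * \<pi>(b,z) * (\<pi>(a,z) * \<pi>(c,z))) \<le> (\<Sum>z<n. e * (\<pi>(a,z) * \<pi>(b,z) * \<pi>(c,z)))"
  proof (intro sum_mono)
    fix z assume "z \<in> {..<n}"
    then have "\<pi>(a,z) * (\<pi>(a,z) * \<pi>(b,z) * \<pi>(c,z)) \<le> e * (\<pi>(a,z) * \<pi>(b,z) * \<pi>(c,z))"
      using prob_range assms by (intro mult_right_mono) auto
    then show "\<pi>(a,z) * \<pi>(b,z) * (\<pi>(a,z) * \<pi>(c,z)) \<le> e * (\<pi>(a,z) * \<pi>(b,z) * \<pi>(c,z))"
      by (simp add: mult_ac)
  qed
  then show ?thesis
    unfolding expectation_codeg_product by (simp add: triple_weight_def sum_distrib_left)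
qed

lemma expectation_codeg_product_pairs_le:
  "expect (\<lambda>G. codeg a b n G * (codeg a c n G ^ 2 - codeg a c n G))
     \<le> 2 * w_abc * w_ac + w_ac ^ 2 * w_ab"
proof -
  have swap: "triple_weight \<pi> a c b n = w_abc"
    by (simp add: triple_weight_def mult_ac)
  interpret swapped: bernoulli_triple I \<pi> a c b n
    using edges_in distinct by unfold_locales auto
  show ?thesis
    using swapped.expectation_codeg_pairs_product_le swap by (simp add: mult.commute)
qed

lemma prob_cherry_ge_moments:
  "expect (\<lambda>G. codeg a b n G * codeg a c n G)
     - expect (\<lambda>G. (codeg a b n G ^ 2 - codeg a b n G) * codeg a c n G) / 2
     - expect (\<lambda>G. codeg a b n G * (codeg a c n G ^ 2 - codeg a c n G)) / 2 \<le> prob cherry"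
proof -
  have "expect (\<lambda>G. codeg a b n G * codeg a c n G
        - (codeg a b n G ^ 2 - codeg a b n G) * codeg a c n G / 2
        - codeg a b n G * (codeg a c n G ^ 2 - codeg a c n G) / 2) \<le> prob cherry"
    unfolding prob_eq_expectation
    using distinct by (intro integral_mono cherry_ge_bonferroni) auto
  then show ?thesis by simp
qed

lemma prob_cherry_ge:
  assumes small_prob: "\<And>z. z < n \<Longrightarrow> \<pi>(a,z) \<le> e"
    and small_weights: "w_ab \<le> e" "w_ac \<le> e"
  shows "(w_abc + w_ab * w_ac) * (1 - 3*e) \<le> prob cherry"
proof -
  have "w_abc + w_ab * w_ac - e * w_abc \<le> expect (\<lambda>G. codeg a b n G * codeg a c n G)"
    using small_prob by (rule expectation_codeg_product_ge)
  then have "w_abc + w_ab * w_ac - e * w_abc - (2 * w_abc * w_ab + w_ab ^ 2 * w_ac) / 2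
      - (2 * w_abc * w_ac + w_ac ^ 2 * w_ab) / 2 \<le> prob cherry"
    using expectation_codeg_pairs_product_le
      expectation_codeg_product_pairs_le prob_cherry_ge_moments
    by argo
  then show ?thesis
    using weights_nonneg small_weights by (intro absorb_second_order_terms) auto
qed

lemma prob_triangle_ge:
  assumes "w_ab \<le> e"
  shows "w_abc * (1 - e) \<le> prob triangle"
proof -
  have "w_abc - w_abc ^ 2 / 2 \<le> expect (codeg3 a b c n)
      - expect (\<lambda>G. codeg3 a b c n G ^ 2 - codeg3 a b c n G) / 2"
    using expectation_codeg3 expectation_codeg3_pairs_le by simp
  also have "\<dots> = expect (\<lambda>G. codeg3 a b c n G - (codeg3 a b c n G ^ 2 - codeg3 a b c n G) / 2)"
    by simp
  also have "\<dots> \<le> prob triangle"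
    unfolding prob_eq_expectation
    using distinct by (intro integral_mono triangle_ge_bonferroni) auto
  finally have "w_abc - w_abc ^ 2 / 2 \<le> prob triangle" .
  moreover have "w_abc * w_abc \<le> w_abc * e"
    using weights_nonneg triple_weight_le_pair_weight assms by (intro mult_left_mono) auto
  moreover have "0 \<le> w_abc * w_abc" "w_abc ^ 2 = w_abc * w_abc" "w_abc * (1 - e) = w_abc - w_abc * e"
    by (simp_all add: power2_eq_square algebra_simps)
  ultimately show ?thesis by linarith
qed

lemma prob_triangle_le:
  assumes "w_bc \<le> e" "0 \<le> e"
  shows "prob triangle \<le> w_abc + e * (w_abc + w_ab * w_ac)"
proof -
  have "prob triangle \<le> expect (\<lambda>G. codeg3 a b c n G + triangle_witnesses a b c n G)"
    unfolding prob_eq_expectation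
    using distinct by (intro integral_mono triangle_le_codeg3_plus_witnesses) auto
  also have "\<dots> \<le> w_abc + w_ab * w_ac * w_bc"
    using expectation_codeg3 expectation_triangle_witnesses_le by simp
  also have "\<dots> \<le> w_abc + e * (w_abc + w_ab * w_ac)"
  proof -
    have "w_ab * w_ac * w_bc \<le> w_ab * w_ac * e"
      using weights_nonneg assms by (intro mult_left_mono) auto
    moreover have "0 \<le> e * w_abc" using weights_nonneg assms by simp
    ultimately show ?thesis by (simp add: algebra_simps)
  qed
  finally show ?thesis .
qed

lemma cprob_triangle_cherry_approx:
  assumes small_prob: "\<And>z. z < n \<Longrightarrow> \<pi>(a,z) \<le> e"
    and small_weights: "w_ab \<le> e" "w_ac \<le> e" "w_bc \<le> e"
    and e: "0 \<le> e" "e \<le> 1/6" and pos: "0 < w_abc"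
  shows "\<bar>cprob random_graph (\<lambda>G. proj_edge n G b c) cherry - w_abc / (w_abc + w_ab * w_ac)\<bar>
           \<le> 8 * e"
  unfolding cprob_def
proof (rule ratio_approx)
  show "0 < w_abc + w_ab * w_ac" "w_abc \<le> w_abc + w_ab * w_ac"
    using pos weights_nonneg by (auto intro: add_pos_nonneg)
qed (use assms weights_nonneg prob_cherry_le prob_cherry_ge prob_triangle_ge prob_triangle_le in auto)

end

section \<open>The weighted model\<close>

lemma sum_eq_moment: "0 < n \<Longrightarrow> (\<Sum>j<n. g j ^ k) = real n * moment n g k"
  by (simp add: moment_def)

lemma moment_pos: "0 < n \<Longrightarrow> (\<And>j. j < n \<Longrightarrow> 0 < g j) \<Longrightarrow> 0 < moment n g k"
  unfolding moment_def by (intro divide_pos_pos sum_pos) auto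

lemma pair_weight_product_form:
  assumes "\<And>z. z < n \<Longrightarrow> \<pi> (x,z) = f x * g z / K" "\<And>z. z < n \<Longrightarrow> \<pi> (y,z) = f y * g z / K"
  shows "pair_weight \<pi> x y n = f x * f y * (\<Sum>z<n. g z ^ 2) / K\<^sup>2"
  unfolding pair_weight_def sum_distrib_left sum_divide_distrib
  by (intro sum.cong refl) (simp add: assms power2_eq_square)

lemma triple_weight_product_form:
  assumes "\<And>z. z < n \<Longrightarrow> \<pi> (x,z) = f x * g z / K" "\<And>z. z < n \<Longrightarrow> \<pi> (y,z) = f y * g z / K"
    "\<And>z. z < n \<Longrightarrow> \<pi> (w,z) = f w * g z / K"
  shows "triple_weight \<pi> x y w n = f x * f y * f w * (\<Sum>z<n. g z ^ 3) / K ^ 3"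
  unfolding triple_weight_def sum_distrib_left sum_divide_distrib
  by (intro sum.cong refl) (simp add: assms power3_eq_cube)

lemma inverse_one_plus_moment_ratio:
  fixes M1 M2 M3 N x y z :: real
  assumes "0 < M1" "0 < M2" "0 < M3" "0 < N" "0 < x" "0 < y" "0 < z"
  shows "1 / (1 + M2\<^sup>2 / (M3 * M1) * x) =
    x * y * z * M3 / (N\<^sup>2 * M1 ^ 3) /
      (x * y * z * M3 / (N\<^sup>2 * M1 ^ 3) + x * y * M2 / (N * M1\<^sup>2) * (x * z * M2 / (N * M1\<^sup>2)))"
proof -
  have "x * y * z * M3 / (N\<^sup>2 * M1 ^ 3) + x * y * M2 / (N * M1\<^sup>2) * (x * z * M2 / (N * M1\<^sup>2))
      = x * y * z * M3 / (N\<^sup>2 * M1 ^ 3) * (1 + M2\<^sup>2 / (M3 * M1) * x)"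
    using assms by (simp add: field_simps power2_eq_square power3_eq_cube)
  then show ?thesis using assms by simp
qed

locale weighted_bipartite =
  fixes nL n :: nat and wL wR :: "nat \<Rightarrow> real"
  assumes right_nonempty: "0 < n"
    and wL_pos: "\<And>i. i < nL \<Longrightarrow> 0 < wL i" and wR_pos: "\<And>j. j < n \<Longrightarrow> 0 < wR j"
    and edge_weight_le_1: "\<And>i j. i < nL \<Longrightarrow> j < n \<Longrightarrow> wL i * wR j / (real n * moment n wR 1) \<le> 1"
begin

definition edge_prob_of :: "nat \<times> nat \<Rightarrow> real" where
  "edge_prob_of = (\<lambda>(i,j). edge_prob n wL wR i j)"

lemma moment_R_pos: "0 < moment n wR k"
  using right_nonempty wR_pos by (rule moment_pos)

lemma edge_prob_of_eq:
  "i < nL \<Longrightarrow> j < n \<Longrightarrow> edge_prob_of (i,j) = wL i * wR j / (real n * moment n wR 1)"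
  using edge_weight_le_1 by (simp add: edge_prob_of_def edge_prob_def)

sublocale bernoulli_edges "{..<nL} \<times> {..<n}" edge_prob_of
proof
  fix x assume "x \<in> {..<nL} \<times> {..<n}"
  then obtain i j where ij: "x = (i,j)" "i < nL" "j < n" by blast
  then have "0 < wL i * wR j / (real n * moment n wR 1)"
    using wL_pos wR_pos right_nonempty moment_R_pos by (intro divide_pos_pos mult_pos_pos) auto
  then show "0 \<le> edge_prob_of x \<and> edge_prob_of x \<le> 1"
    using edge_weight_le_1[OF ij(2,3)] ij by (simp add: edge_prob_of_eq)
qed simp

lemma bip_graph_eq_random_graph: "bip_graph nL n wL wR = random_graph"
  by (simp add: bip_graph_def edge_prob_of_def case_prod_unfold)

lemma pair_weight_eq:
  assumes "x < nL" "y < nL"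
  shows "pair_weight edge_prob_of x y n
    = wL x * wL y * moment n wR 2 / (real n * (moment n wR 1)\<^sup>2)"
proof -
  have "pair_weight edge_prob_of x y n
      = wL x * wL y * (\<Sum>z<n. wR z ^ 2) / (real n * moment n wR 1)\<^sup>2"
    by (rule pair_weight_product_form) (simp_all add: edge_prob_of_eq assms)
  then show ?thesis
    unfolding sum_eq_moment[OF right_nonempty] using right_nonempty moment_R_pos
    by (simp add: power2_eq_square mult_ac)
qed

lemma triple_weight_eq:
  assumes "x < nL" "y < nL" "w < nL"
  shows "triple_weight edge_prob_of x y w n
    = wL x * wL y * wL w * moment n wR 3 / ((real n)\<^sup>2 * (moment n wR 1) ^ 3)"
proof -
  have "triple_weight edge_prob_of x y w n
      = wL x * wL y * wL w * (\<Sum>z<n. wR z ^ 3) / (real n * moment n wR 1) ^ 3"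
    by (rule triple_weight_product_form) (simp_all add: edge_prob_of_eq assms)
  then show ?thesis
    unfolding sum_eq_moment[OF right_nonempty] using right_nonempty moment_R_pos
    by (simp add: power2_eq_square power3_eq_cube mult_ac)
qed

lemma pair_weight_le:
  assumes wL_le: "\<And>i. i < nL \<Longrightarrow> wL i \<le> W" and "x < nL" "y < nL"
  shows "pair_weight edge_prob_of x y n \<le> W\<^sup>2 * moment n wR 2 / (real n * (moment n wR 1)\<^sup>2)"
proof -
  have "wL x * wL y \<le> W\<^sup>2"
    unfolding power2_eq_square
    using wL_le[OF assms(2)] wL_le[OF assms(3)] wL_pos[OF assms(2)] wL_pos[OF assms(3)]
    by (intro mult_mono) auto
  then show ?thesis
    using right_nonempty moment_R_pos[of 2, THEN less_imp_le] moment_R_pos[of 1]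
    by (auto simp: pair_weight_eq assms intro!: divide_right_mono mult_right_mono)
qed

lemma edge_prob_of_sq_le:
  assumes wL_le: "\<And>i. i < nL \<Longrightarrow> wL i \<le> W" and "x < nL" "z < n"
  shows "(edge_prob_of (x,z))\<^sup>2 \<le> W\<^sup>2 * moment n wR 2 / (real n * (moment n wR 1)\<^sup>2)"
proof -
  have "wR z ^ 2 \<le> real n * moment n wR 2"
    unfolding sum_eq_moment[OF right_nonempty, symmetric] using assms(3) by (intro member_le_sum) auto
  moreover have "wL x ^ 2 \<le> W\<^sup>2"
    using wL_le[OF assms(2)] wL_pos[OF assms(2)] by (intro power_mono) auto
  ultimately have "(wL x * wR z)\<^sup>2 \<le> W\<^sup>2 * (real n * moment n wR 2)"
    unfolding power_mult_distrib by (intro mult_mono) auto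
  then have "(edge_prob_of (x,z))\<^sup>2 \<le> W\<^sup>2 * (real n * moment n wR 2) / (real n * moment n wR 1)\<^sup>2"
    by (simp add: edge_prob_of_eq assms power_divide divide_right_mono)
  also have "\<dots> = W\<^sup>2 * moment n wR 2 / (real n * (moment n wR 1)\<^sup>2)"
    using right_nonempty by (simp add: power2_eq_square mult_ac)
  finally show ?thesis .
qed

lemma cprob_projected_edge_approx:
  assumes nodes: "u < nL" "u1 < nL" "u2 < nL"
    and distinct: "u \<noteq> u1" "u \<noteq> u2" "u1 \<noteq> u2"
    and wL_le: "\<And>i. i < nL \<Longrightarrow> wL i \<le> W"
    and small: "W\<^sup>2 * moment n wR 2 \<le> e\<^sup>2 * (real n * (moment n wR 1)\<^sup>2)"
    and e: "0 \<le> e" "e \<le> 1/6"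
  shows "\<bar>cprob (bip_graph nL n wL wR)
                 (\<lambda>Gb. proj_edge n Gb u1 u2)
                 (\<lambda>Gb. proj_edge n Gb u u1 \<and> proj_edge n Gb u u2)
             - 1 / (1 + (moment n wR 2)\<^sup>2 / (moment n wR 3 * moment n wR 1) * wL u)\<bar> \<le> 8 * e"
proof -
  interpret bernoulli_triple "{..<nL} \<times> {..<n}" edge_prob_of u u1 u2 n
    using nodes distinct by unfold_locales auto
  have quadratic_small: "W\<^sup>2 * moment n wR 2 / (real n * (moment n wR 1)\<^sup>2) \<le> e\<^sup>2"
    using small right_nonempty moment_R_pos[of 1] by (simp add: pos_divide_le_eq mult.assoc)
  have "e\<^sup>2 \<le> e" using e by (simp add: power2_eq_square mult_left_le)
  have "edge_prob_of (u,z) \<le> e" if "z < n" for z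
  proof (rule power2_le_imp_le[OF _ e(1)])
    show "(edge_prob_of (u,z))\<^sup>2 \<le> e\<^sup>2"
      using edge_prob_of_sq_le[of W u z] wL_le nodes(1) that quadratic_small by fastforce
  qed
  moreover have "pair_weight edge_prob_of x y n \<le> e" if "x < nL" "y < nL" for x y
    using pair_weight_le[of W x y] wL_le that quadratic_small \<open>e\<^sup>2 \<le> e\<close> by fastforce
  moreover have "0 < w_abc"
    using wL_pos nodes right_nonempty moment_R_pos by (simp add: triple_weight_eq)
  ultimately have "\<bar>cprob random_graph (\<lambda>G. proj_edge n G u1 u2) cherry
      - w_abc / (w_abc + w_ab * w_ac)\<bar> \<le> 8 * e"
    using nodes e by (intro cprob_triangle_cherry_approx) auto
  moreover have "1 / (1 + (moment n wR 2)\<^sup>2 / (moment n wR 3 * moment n wR 1) * wL u)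
      = w_abc / (w_abc + w_ab * w_ac)"
    unfolding triple_weight_eq[OF nodes] pair_weight_eq[OF nodes(1,2)] pair_weight_eq[OF nodes(1,3)]
    by (rule inverse_one_plus_moment_ratio) (use right_nonempty moment_R_pos wL_pos nodes in auto)
  ultimately show ?thesis by (simp add: bip_graph_eq_random_graph)
qed

end

lemma quadratic_weight_bound:
  fixes N W M1 M2 c1 c2 \<delta> :: real
  assumes "0 < N" "0 \<le> W" "W \<le> c1 * N powr (1/2 - \<delta>)" "0 \<le> M2" "M2 \<le> c2 * M1\<^sup>2" "0 \<le> c2"
  shows "W\<^sup>2 * M2 \<le> (c1 * sqrt c2 * N powr (- \<delta>))\<^sup>2 * (N * M1\<^sup>2)"
proof -
  have "(N powr (1/2 - \<delta>))\<^sup>2 = N powr (1 + (- \<delta>) + (- \<delta>))"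
    unfolding power2_eq_square powr_add[symmetric] by (simp add: algebra_simps)
  also have "\<dots> = N * (N powr (- \<delta>))\<^sup>2"
    using \<open>0 < N\<close> unfolding powr_add by (simp add: power2_eq_square)
  finally have "(c1 * N powr (1/2 - \<delta>))\<^sup>2 * (c2 * M1\<^sup>2)
      = (c1 * sqrt c2 * N powr (- \<delta>))\<^sup>2 * (N * M1\<^sup>2)"
    unfolding power_mult_distrib real_sqrt_pow2[OF \<open>0 \<le> c2\<close>] by (simp only: mult_ac)
  moreover have "W\<^sup>2 * M2 \<le> (c1 * N powr (1/2 - \<delta>))\<^sup>2 * (c2 * M1\<^sup>2)"
    using assms by (intro mult_mono power_mono) auto
  ultimately show ?thesis by (rule ord_le_eq_trans[rotated])
qed

lemma cprob_projected_edge_approx_powr: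
  fixes nL n :: nat and wL wR :: "nat \<Rightarrow> real" and u u1 u2 :: nat and c1 c2 \<delta> :: real
  assumes n: "0 < n"
    and wL_pos: "\<And>i. i < nL \<Longrightarrow> 0 < wL i" and wR_pos: "\<And>j. j < n \<Longrightarrow> 0 < wR j"
    and assm1: "\<And>i j. i < nL \<Longrightarrow> j < n \<Longrightarrow> wL i * wR j / (real n * moment n wR 1) \<le> 1"
    and nodes: "u < nL" "u1 < nL" "u2 < nL"
    and distinct: "u \<noteq> u1" "u \<noteq> u2" "u1 \<noteq> u2"
    and max_bound: "Max (wL ` {..<nL} \<union> wR ` {..<n}) \<le> c1 * real n powr (1/2 - \<delta>)"
    and moment_bound: "moment n wR 2 \<le> c2 * (moment n wR 1)\<^sup>2"
    and c: "0 \<le> c1" "0 \<le> c2" and small: "c1 * sqrt c2 * real n powr (- \<delta>) \<le> 1/6"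
  shows "\<bar>cprob (bip_graph nL n wL wR)
                 (\<lambda>Gb. proj_edge n Gb u1 u2)
                 (\<lambda>Gb. proj_edge n Gb u u1 \<and> proj_edge n Gb u u2)
             - 1 / (1 + (moment n wR 2)\<^sup>2 / (moment n wR 3 * moment n wR 1) * wL u)\<bar>
         \<le> 8 * (c1 * sqrt c2 * real n powr (- \<delta>))"
proof -
  interpret weighted_bipartite nL n wL wR
    using n wL_pos wR_pos assm1 by unfold_locales
  let ?W = "Max (wL ` {..<nL} \<union> wR ` {..<n})"
  have W: "wL i \<le> ?W" if "i < nL" for i
    using that by (intro Max_ge) auto
  have "?W\<^sup>2 * moment n wR 2 \<le> (c1 * sqrt c2 * real n powr (- \<delta>))\<^sup>2 * (real n * (moment n wR 1)\<^sup>2)"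
    using n W[OF nodes(1)] wL_pos[OF nodes(1)] moment_R_pos max_bound moment_bound c
    by (intro quadratic_weight_bound) (auto intro: less_imp_le)
  then show ?thesis
    using c small by (intro cprob_projected_edge_approx[OF nodes distinct W]) auto
qed

theorem mainTheorem9:
  fixes nL nR :: "nat \<Rightarrow> nat"
    and wL wR :: "nat \<Rightarrow> nat \<Rightarrow> real"
    and u u1 u2 :: "nat \<Rightarrow> nat"
    and \<delta> :: real
  assumes nL_lim: "filterlim nL at_top sequentially"
    and nR_lim: "filterlim nR at_top sequentially"
    and wL_pos: "\<And>m i. i < nL m \<Longrightarrow> wL m i > 0"
    and wR_pos: "\<And>m j. j < nR m \<Longrightarrow> wR m j > 0"
    and assm1: "\<And>m i j. i < nL m \<Longrightarrow> j < nR m \<Longrightarrow>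
                   wL m i * wR m j / (real (nR m) * moment (nR m) (wR m) 1) \<le> 1"
    and delta: "\<delta> > 1/10"
    and max_bound: "(\<lambda>m. Max (wL m ` {..<nL m} \<union> wR m ` {..<nR m}))
                      \<in> O(\<lambda>m. real (nR m) powr (1/2 - \<delta>))"
    and min_bound: "(\<lambda>m. Min (wL m ` {..<nL m})) \<in> \<Omega>(\<lambda>m. 1)"
    and MR2_bound: "(\<lambda>m. moment (nR m) (wR m) 2) \<in> O(\<lambda>m. (moment (nR m) (wR m) 1)\<^sup>2)"
    and MR4_bound: "(\<lambda>m. moment (nR m) (wR m) 4) \<in> O(\<lambda>m. real (nR m) powr (1 - 2 * \<delta>))"
    and nodes: "\<And>m. u m < nL m \<and> u1 m < nL m \<and> u2 m < nL m"
    and distinct: "\<And>m. u m \<noteq> u1 m \<and> u m \<noteq> u2 m \<and> u1 m \<noteq> u2 m"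
  shows "(\<lambda>m. cprob (bip_graph (nL m) (nR m) (wL m) (wR m))
                 (\<lambda>Gb. proj_edge (nR m) Gb (u1 m) (u2 m))
                 (\<lambda>Gb. proj_edge (nR m) Gb (u m) (u1 m) \<and> proj_edge (nR m) Gb (u m) (u2 m))
             - 1 / (1 + (moment (nR m) (wR m) 2)\<^sup>2
                       / (moment (nR m) (wR m) 3 * moment (nR m) (wR m) 1) * wL m (u m)))
          \<longlonglongrightarrow> 0"
proof -
  define W where "W m = Max (wL m ` {..<nL m} \<union> wR m ` {..<nR m})" for m
  define M1 M2 where "M1 m = moment (nR m) (wR m) 1" and "M2 m = moment (nR m) (wR m) 2" for m
  obtain c1 where c1: "c1 > 0"
    "eventually (\<lambda>m. norm (W m) \<le> c1 * norm (real (nR m) powr (1/2 - \<delta>))) sequentially"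
    using max_bound unfolding W_def by (elim landau_o.bigE)
  obtain c2 where c2: "c2 > 0" "eventually (\<lambda>m. norm (M2 m) \<le> c2 * norm ((M1 m)\<^sup>2)) sequentially"
    using MR2_bound unfolding M1_def M2_def by (elim landau_o.bigE)
  define e where "e m = c1 * sqrt c2 * real (nR m) powr (- \<delta>)" for m
  have "e \<longlonglongrightarrow> 0"
    unfolding e_def using delta
    by (intro tendsto_mult_right_zero tendsto_neg_powr
        filterlim_compose[OF filterlim_real_sequentially nR_lim]) auto
  then have "eventually (\<lambda>m. e m \<le> 1/6) sequentially"
    using order_tendstoD(2)[of e 0 sequentially "1/6"] by (auto elim: eventually_mono)
  moreover have "eventually (\<lambda>m. 1 \<le> nR m) sequentially"
    using nR_lim by (simp add: filterlim_at_top)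
  ultimately have bound: "eventually (\<lambda>m. \<bar>cprob (bip_graph (nL m) (nR m) (wL m) (wR m))
                 (\<lambda>Gb. proj_edge (nR m) Gb (u1 m) (u2 m))
                 (\<lambda>Gb. proj_edge (nR m) Gb (u m) (u1 m) \<and> proj_edge (nR m) Gb (u m) (u2 m))
             - 1 / (1 + (moment (nR m) (wR m) 2)\<^sup>2
                       / (moment (nR m) (wR m) 3 * moment (nR m) (wR m) 1) * wL m (u m))\<bar> \<le> 8 * e m)
      sequentially"
    using c1(2) c2(2)
  proof eventually_elim
    case (elim m)
    then show ?case
      using c1(1) c2(1) nodes[of m] distinct[of m] unfolding e_def W_def M1_def M2_def
      by (intro cprob_projected_edge_approx_powr[OF _ wL_pos wR_pos assm1]) auto
  qed
  have "(\<lambda>m. 8 * e m) \<longlonglongrightarrow> 0"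
    using tendsto_mult_right_zero[OF \<open>e \<longlonglongrightarrow> 0\<close>] by simp
  then show ?thesis
    by (rule Lim_null_comparison[rotated]) (use bound in simp)
qed

end
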